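(* Let $H(s)=K\,\frac{\prod_{i=1}^{m}(s-z_i)}{\prod_{i=1}^{n}(s-p_i)}$ be a rational function with real coefficients, where $K\neq 0$ is real, $z=(z_1,\dots,z_m)\in\mathbb{C}^m$ are its zeros and $p=(p_1,\dots,p_n)\in\mathbb{C}^n$ its poles. Then $H$ is logarithmically completely monotonic if and only if $K>0$ and $$\sum_{i=1}^n \exp(p_i t)\;\geq\;\sum_{i=1}^m \exp(z_i t)\qquad\text{for all } t\in[0,+\infty).$$
   Context: Let $\sigma(H)=\max_i \operatorname{Re}(p_i)$ be the pole abscissa. A function $H$ is logarithmically completely monotonic (LCM) on an interval $I\subseteq\mathbb{R}$ if $H(s)>0$ and $(-1)^k[\log H(s)]^{(k)}\geq 0$ for all $k\in\mathbb{N}=\{1,2,\dots\}$ and all $s\in I$, where $^{(k)}$ denotes the $k$-th derivative. Throughout, "$H$ is LCM" means LCM on $I=(\sigma(H),+\infty)$. *)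

theory Defs
  imports "HOL-Analysis.Analysis" "HOL-Computational_Algebra.Polynomial"
begin

definition rat_fun :: "real \<Rightarrow> complex list \<Rightarrow> complex list \<Rightarrow> complex \<Rightarrow> complex" where
  "rat_fun K z p s = complex_of_real K * (\<Prod>zi\<leftarrow>z. s - zi) / (\<Prod>pi\<leftarrow>p. s - pi)"

definition roots_poly :: "complex list \<Rightarrow> complex poly" where
  "roots_poly r = (\<Prod>ri\<leftarrow>r. [:- ri, 1:])"

definition abscissa_interval :: "complex list \<Rightarrow> real set" where
  "abscissa_interval p = (if p = [] then UNIV else {Max (Re ` set p) <..})"

definition LCM_on :: "(real \<Rightarrow> real) \<Rightarrow> real set \<Rightarrow> bool" where
  "LCM_on f I \<longleftrightarrow> (\<forall>s\<in>I. f s > 0) \<and>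
     (\<forall>k::nat. k \<ge> 1 \<longrightarrow> (\<forall>s\<in>I. (-1) ^ k * (deriv ^^ k) (\<lambda>x. ln (f x)) s \<ge> 0))"

end

theory Submission
  imports Defs
begin

text \<open>
  Right of all zeros and poles, (ln H)^(k+1)(x) = (-1)^k k! S_(k+1)(x), where
  S_k(x) = \<Sum>_i Re (x - z_i)^(-k) - \<Sum>_i Re (x - p_i)^(-k); so H is LCM iff it is positive
  there and every S_k is nonpositive. Put g(t) = \<Sum>_i Re exp (p_i t) - \<Sum>_i Re exp (z_i t).
  Since (x - c)^(-k-1) = (1/k!) \<integral>_0^\<infinity> t^k exp (-(x - c) t) dt for Re c < x, the number
  -k! S_(k+1)(x) is the Laplace transform of t^k g(t), so g \<ge> 0 gives the LCM property.
  Conversely, the Post-Widder limit (1 - c t/k)^(-k) \<longrightarrow> exp (c t) recovers g(t) as the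
  limit of -x^k S_k(x) at x = k/t, so the LCM property gives g \<ge> 0.
  The Laplace representation also needs the zeros left of the abscissa of the poles. If some
  zero were further right, Dirichlet's simultaneous approximation would give arbitrarily large t
  at which the zeros of largest real part all have cos (Im z_i t) \<ge> 1/2; they then dominate
  g(t) and make it negative. Finally, the sign of K is the sign of H at +\<infinity>.
\<close>

lemma has_field_derivative_sum_list:
  assumes "\<And>c. c \<in> set cs \<Longrightarrow> (F c has_field_derivative F' c) (at x)"
  shows "((\<lambda>x. \<Sum>c\<leftarrow>cs. F c x) has_field_derivative (\<Sum>c\<leftarrow>cs. F' c)) (at x)"
  using assms by (induction cs) (auto intro!: derivative_eq_intros)

lemma tendsto_sum_list:
  fixes F :: "'a \<Rightarrow> 'c \<Rightarrow> 'b::topological_monoid_add"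
  assumes "\<And>c. c \<in> set cs \<Longrightarrow> (F c \<longlongrightarrow> L c) G"
  shows "((\<lambda>n. \<Sum>c\<leftarrow>cs. F c n) \<longlongrightarrow> (\<Sum>c\<leftarrow>cs. L c)) G"
  using assms by (induction cs) (auto intro!: tendsto_add)

lemma Re_sum_list: "Re (\<Sum>c\<leftarrow>cs. F c) = (\<Sum>c\<leftarrow>cs. Re (F c))"
  by (induction cs) auto

lemma Re_mult_of_real: "Re (complex_of_real r * w) = r * Re w"
  by simp

lemma norm_prod_list: "norm (\<Prod>c\<leftarrow>cs. F c) = (\<Prod>c\<leftarrow>cs. norm (F c :: 'a::real_normed_div_algebra))"
  by (induction cs) (auto simp: norm_mult)

lemma ln_prod_list:
  "(\<And>c. c \<in> set cs \<Longrightarrow> F c \<noteq> 0) \<Longrightarrow> ln (\<Prod>c\<leftarrow>cs. F c) = (\<Sum>c\<leftarrow>cs. ln (F c :: real))"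
  by (induction cs) (auto simp: ln_mult prod_list_zero_iff)

lemma sum_list_filter_partition:
  "(\<Sum>c\<leftarrow>cs. F c) = (\<Sum>c\<leftarrow>filter P cs. F c) + (\<Sum>c\<leftarrow>filter (\<lambda>c. \<not> P c) cs. F c :: 'a::comm_monoid_add)"
  by (induction cs) (auto simp: ac_simps)

lemma fact_mult_le_0_iff: "fact k * s \<le> 0 \<longleftrightarrow> s \<le> (0::'a::linordered_field)"
  using mult_le_cancel_left_pos[of "fact k" s 0] by simp

lemma all_ge_1_iff_all_Suc: "(\<forall>k::nat. k \<ge> 1 \<longrightarrow> Q k) \<longleftrightarrow> (\<forall>k. Q (Suc k))"
proof (intro iffI allI impI)
  fix k :: nat
  assume "\<forall>k. Q (Suc k)" and "k \<ge> 1"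
  then show "Q k"
    by (cases k) auto
qed simp

lemma minus_one_power_Suc_fact_mult_nonneg_iff:
  "0 \<le> (-1) ^ Suc k * ((-1) ^ k * fact k * s) \<longleftrightarrow> s \<le> (0::'a::linordered_field)"
proof -
  have "(-1::'a) ^ Suc k * ((-1) ^ k * fact k * s) = - (fact k * s)"
    by (simp add: algebra_simps flip: power_add)
  then show ?thesis
    by (simp only: neg_0_le_iff_le fact_mult_le_0_iff)
qed

lemma isCont_prod_list_of_real_minus:
  "isCont (\<lambda>x::real. \<Prod>c\<leftarrow>cs. complex_of_real x - c) y"
  by (induction cs) (auto intro!: continuous_intros)

subsection \<open>Derivatives of the logarithm of a rational function\<close>

lemma has_real_derivative_Re_of_real:
  assumes "(h has_field_derivative D) (at (complex_of_real x))"
  shows "((\<lambda>x. Re (h (complex_of_real x))) has_real_derivative Re D) (at x)"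
proof -
  have "((h \<circ> complex_of_real) has_vector_derivative (1 * D)) (at x)"
    by (rule field_vector_diff_chain_at[of complex_of_real 1 x h D, OF _ assms])
       (auto intro!: derivative_eq_intros simp: has_vector_derivative_def scaleR_conv_of_real)
  then show ?thesis
    using has_field_derivative_Re by (simp add: o_def)
qed

lemma deriv_eq_on_open:
  assumes "open S" "x \<in> S" "\<And>y. y \<in> S \<Longrightarrow> F y = G y" "(G has_field_derivative D) (at x)"
  shows "deriv F x = D"
proof -
  have "deriv F x = deriv G x"
    by (rule deriv_cong_ev) (use assms in \<open>auto intro: eventually_nhds_in_open eventually_mono\<close>)
  with assms(4) show ?thesis
    by (simp add: DERIV_imp_deriv)
qed

lemma has_field_derivative_inverse_power:
  fixes c w :: "'a::real_normed_field"
  assumes "w \<noteq> c"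
  shows "((\<lambda>w. inverse ((w - c) ^ k)) has_field_derivative - of_nat k * inverse ((w - c) ^ Suc k)) (at w)"
proof -
  have "((\<lambda>w. inverse ((w - c) ^ k)) has_field_derivative
      - (inverse ((w - c) ^ k) * (of_nat k * (w - c) ^ (k - 1) * 1) * inverse ((w - c) ^ k))) (at w)"
    using assms by (auto intro!: derivative_eq_intros)
  also have "- (inverse ((w - c) ^ k) * (of_nat k * (w - c) ^ (k - 1) * 1) * inverse ((w - c) ^ k))
      = - of_nat k * inverse ((w - c) ^ Suc k)"
    using assms by (cases k) (simp_all add: divide_simps)
  finally show ?thesis .
qed

definition re_inv_pow :: "complex \<Rightarrow> nat \<Rightarrow> real \<Rightarrow> real" where
  "re_inv_pow c k x = Re (inverse ((complex_of_real x - c) ^ k))"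

lemma re_inv_pow_deriv:
  assumes "complex_of_real x \<noteq> c"
  shows "(re_inv_pow c k has_real_derivative - real k * re_inv_pow c (Suc k) x) (at x)"
proof -
  have "((\<lambda>x. Re (inverse ((complex_of_real x - c) ^ k))) has_real_derivative
      Re (- of_nat k * inverse ((complex_of_real x - c) ^ Suc k))) (at x)"
    by (rule has_real_derivative_Re_of_real[OF has_field_derivative_inverse_power[OF assms]])
  then show ?thesis
    unfolding re_inv_pow_def [abs_def] by simp
qed

definition ln_dist :: "complex \<Rightarrow> real \<Rightarrow> real" where
  "ln_dist c x = ln (cmod (complex_of_real x - c))"

lemma ln_dist_deriv:
  assumes "complex_of_real x \<noteq> c"
  shows "(ln_dist c has_real_derivative re_inv_pow c 1 x) (at x)"
proof -
  have pos: "(x - Re c)\<^sup>2 + (Im c)\<^sup>2 > 0"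
    using assms by (auto simp: sum_power2_gt_zero_iff complex_eq_iff)
  have "ln_dist c = (\<lambda>x. ln ((x - Re c)\<^sup>2 + (Im c)\<^sup>2) / 2)"
    by (rule ext) (simp add: ln_dist_def cmod_def ln_sqrt add_pos_nonneg)
  moreover have "((\<lambda>x. ln ((x - Re c)\<^sup>2 + (Im c)\<^sup>2) / 2) has_real_derivative
      (x - Re c) / ((x - Re c)\<^sup>2 + (Im c)\<^sup>2)) (at x)"
    using pos by (auto intro!: derivative_eq_intros simp: field_simps power2_eq_square)
  moreover have "re_inv_pow c 1 x = (x - Re c) / ((x - Re c)\<^sup>2 + (Im c)\<^sup>2)"
    by (simp add: re_inv_pow_def power2_eq_square)
  ultimately show ?thesis
    by simp
qed

definition recip_power_sum :: "complex list \<Rightarrow> complex list \<Rightarrow> nat \<Rightarrow> real \<Rightarrow> real" where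
  "recip_power_sum z p k x = (\<Sum>c\<leftarrow>z. re_inv_pow c k x) - (\<Sum>c\<leftarrow>p. re_inv_pow c k x)"

definition ln_abs_rat_fun :: "real \<Rightarrow> complex list \<Rightarrow> complex list \<Rightarrow> real \<Rightarrow> real" where
  "ln_abs_rat_fun K z p x = ln \<bar>K\<bar> + (\<Sum>c\<leftarrow>z. ln_dist c x) - (\<Sum>c\<leftarrow>p. ln_dist c x)"

lemma ln_norm_rat_fun:
  assumes "K \<noteq> 0" and "\<And>c. c \<in> set z \<union> set p \<Longrightarrow> complex_of_real x \<noteq> c"
  shows "ln (cmod (rat_fun K z p (complex_of_real x))) = ln_abs_rat_fun K z p x"
proof -
  have "cmod (rat_fun K z p (complex_of_real x)) =
      \<bar>K\<bar> * (\<Prod>c\<leftarrow>z. cmod (complex_of_real x - c)) / (\<Prod>c\<leftarrow>p. cmod (complex_of_real x - c))"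
    by (simp add: rat_fun_def norm_mult norm_divide norm_prod_list)
  moreover have "cmod (complex_of_real x - c) \<noteq> 0" if "c \<in> set z \<union> set p" for c
    using assms(2)[OF that] by simp
  ultimately show ?thesis
    using assms(1) by (auto simp: ln_abs_rat_fun_def ln_dist_def ln_div ln_mult ln_prod_list prod_list_zero_iff)
qed

lemma recip_power_sum_deriv:
  assumes "\<And>c. c \<in> set z \<union> set p \<Longrightarrow> complex_of_real x \<noteq> c"
  shows "(recip_power_sum z p k has_real_derivative - real k * recip_power_sum z p (Suc k) x) (at x)"
proof -
  have "((\<lambda>x. (\<Sum>c\<leftarrow>z. re_inv_pow c k x) - (\<Sum>c\<leftarrow>p. re_inv_pow c k x)) has_real_derivative
     (\<Sum>c\<leftarrow>z. (- real k) * re_inv_pow c (Suc k) x) - (\<Sum>c\<leftarrow>p. (- real k) * re_inv_pow c (Suc k) x)) (at x)"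
    using assms by (intro DERIV_diff has_field_derivative_sum_list re_inv_pow_deriv) auto
  then show ?thesis
    unfolding recip_power_sum_def [abs_def] by (simp only: sum_list_const_mult right_diff_distrib)
qed

lemma ln_abs_rat_fun_deriv:
  assumes "\<And>c. c \<in> set z \<union> set p \<Longrightarrow> complex_of_real x \<noteq> c"
  shows "(ln_abs_rat_fun K z p has_real_derivative recip_power_sum z p 1 x) (at x)"
proof -
  have "((\<lambda>x. ln \<bar>K\<bar> + (\<Sum>c\<leftarrow>z. ln_dist c x) - (\<Sum>c\<leftarrow>p. ln_dist c x)) has_real_derivative
      0 + (\<Sum>c\<leftarrow>z. re_inv_pow c 1 x) - (\<Sum>c\<leftarrow>p. re_inv_pow c 1 x)) (at x)"
    using assms by (intro DERIV_diff DERIV_add DERIV_const has_field_derivative_sum_list ln_dist_deriv) auto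
  then show ?thesis
    unfolding ln_abs_rat_fun_def [abs_def] recip_power_sum_def by simp
qed

lemma higher_deriv_ln_abs_rat_fun:
  assumes "open S" and roots: "\<And>y c. y \<in> S \<Longrightarrow> c \<in> set z \<union> set p \<Longrightarrow> complex_of_real y \<noteq> c"
    and F: "\<And>y. y \<in> S \<Longrightarrow> F y = ln_abs_rat_fun K z p y"
    and "x \<in> S"
  shows "(deriv ^^ Suc k) F x = (-1) ^ k * fact k * recip_power_sum z p (Suc k) x"
  using \<open>x \<in> S\<close>
proof (induction k arbitrary: x)
  case 0
  then show ?case
    using deriv_eq_on_open[OF \<open>open S\<close> _ F ln_abs_rat_fun_deriv] roots by simp
next
  case (Suc k)
  have "((\<lambda>y. (-1) ^ k * fact k * recip_power_sum z p (Suc k) y) has_real_derivative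
      (-1) ^ k * fact k * (- real (Suc k) * recip_power_sum z p (Suc (Suc k)) x)) (at x)"
    using Suc.prems roots by (intro DERIV_cmult recip_power_sum_deriv)
  then have "deriv ((deriv ^^ Suc k) F) x =
      (-1) ^ k * fact k * (- real (Suc k) * recip_power_sum z p (Suc (Suc k)) x)"
    using Suc by (intro deriv_eq_on_open[OF \<open>open S\<close>]) auto
  then show ?case
    by (simp add: algebra_simps)
qed

subsection \<open>The exponential sum and the Post-Widder inversion\<close>

definition exp_sum_gap :: "complex list \<Rightarrow> complex list \<Rightarrow> real \<Rightarrow> real" where
  "exp_sum_gap z p t = Re (\<Sum>c\<leftarrow>p. exp (c * complex_of_real t)) - Re (\<Sum>c\<leftarrow>z. exp (c * complex_of_real t))"

lemma exp_sum_gap_0: "exp_sum_gap z p 0 = real (length p) - real (length z)"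
  by (simp add: exp_sum_gap_def Re_sum_list sum_list_triv)

lemma norm_of_nat_mult_ln_one_plus_div_le:
  fixes w :: complex
  assumes n: "real n > 2 * cmod w"
  shows "norm (of_nat n * ln (1 + w / of_nat n) - w) \<le> 2 * (cmod w)\<^sup>2 / real n"
proof -
  have np: "real n > 0"
    using n norm_ge_zero[of w] by linarith
  have nw: "cmod (w / of_nat n) = cmod w / real n"
    by (simp add: norm_divide)
  have small: "cmod w / real n < 1/2"
    using n np by (auto simp: divide_less_eq)
  have "norm (ln (1 + w / of_nat n) - w / of_nat n) \<le> cmod (w / of_nat n) ^ 2 / (1 - cmod (w / of_nat n))"
    by (rule Ln_approx_linear) (use small nw in linarith)
  also have "\<dots> \<le> (cmod w / real n)\<^sup>2 / (1/2)"
  proof -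
    have "1/2 \<le> 1 - cmod w / real n" "0 < 1 - cmod w / real n"
      using small by linarith+
    then show ?thesis
      unfolding nw by (intro divide_left_mono) auto
  qed
  finally have approx: "norm (ln (1 + w / of_nat n) - w / of_nat n) \<le> 2 * (cmod w / real n)\<^sup>2"
    by simp
  have "of_nat n * ln (1 + w / of_nat n) - w = of_nat n * (ln (1 + w / of_nat n) - w / of_nat n)"
    using np by (simp add: field_simps)
  then have "norm (of_nat n * ln (1 + w / of_nat n) - w) = real n * norm (ln (1 + w / of_nat n) - w / of_nat n)"
    by (simp add: norm_mult)
  also have "\<dots> \<le> real n * (2 * (cmod w / real n)\<^sup>2)"
    using approx by (intro mult_left_mono) auto
  also have "\<dots> = 2 * (cmod w)\<^sup>2 / real n"
    using np by (simp add: field_simps power2_eq_square)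
  finally show ?thesis .
qed

lemma tendsto_cexp_limit_sequentially: "(\<lambda>n. (1 + w / of_nat n) ^ n) \<longlonglongrightarrow> exp (w::complex)"
proof -
  have large: "eventually (\<lambda>n. real n > 2 * cmod w) sequentially"
    using eventually_gt_at_top[of "nat \<lceil>2 * cmod w\<rceil>"] by eventually_elim linarith
  have "(\<lambda>n. of_nat n * ln (1 + w / of_nat n) - w) \<longlonglongrightarrow> 0"
  proof (rule Lim_null_comparison)
    show "eventually (\<lambda>n. norm (of_nat n * ln (1 + w / of_nat n) - w) \<le> 2 * (cmod w)\<^sup>2 / real n) sequentially"
      using large by eventually_elim (rule norm_of_nat_mult_ln_one_plus_div_le)
  qed (rule lim_const_over_n)
  then have "(\<lambda>n. exp (of_nat n * ln (1 + w / of_nat n) - w + w)) \<longlonglongrightarrow> exp (0 + w)"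
    by (intro tendsto_exp tendsto_add tendsto_const)
  moreover have "eventually (\<lambda>n. exp (of_nat n * ln (1 + w / of_nat n) - w + w) = (1 + w / of_nat n) ^ n) sequentially"
    using large
  proof eventually_elim
    case (elim n)
    then have "real n > 0"
      using norm_ge_zero[of w] by linarith
    have "1 + w / of_nat n \<noteq> 0"
    proof
      assume "1 + w / of_nat n = 0"
      with \<open>real n > 0\<close> have "w = - of_nat n"
        by (simp add: field_simps eq_neg_iff_add_eq_0)
      with elim show False
        by simp
    qed
    then show ?case
      by (simp add: exp_of_nat_mult)
  qed
  ultimately show ?thesis
    by (simp add: Lim_transform_eventually)
qed

lemma re_inv_pow_scaled:
  assumes "x > 0"
  shows "x ^ k * re_inv_pow c k x = Re (inverse ((1 - c / complex_of_real x) ^ k))"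
proof -
  have "complex_of_real (x ^ k) * inverse ((complex_of_real x - c) ^ k)
      = inverse (((complex_of_real x - c) / complex_of_real x) ^ k)"
    using assms by (simp add: power_divide field_simps)
  also have "(complex_of_real x - c) / complex_of_real x = 1 - c / complex_of_real x"
    using assms by (simp add: field_simps)
  finally show ?thesis
    unfolding re_inv_pow_def by (metis Re_mult_of_real)
qed

lemma exp_sum_gap_nonneg_post_widder:
  assumes t: "t > 0"
    and nonpos: "eventually (\<lambda>k. recip_power_sum z p (Suc k) (real (Suc k) / t) \<le> 0) sequentially"
  shows "exp_sum_gap z p t \<ge> 0"
proof -
  define u where "u k = (\<Sum>c\<leftarrow>p. Re (inverse ((1 + (- c * complex_of_real t) / of_nat k) ^ k)))
     - (\<Sum>c\<leftarrow>z. Re (inverse ((1 + (- c * complex_of_real t) / of_nat k) ^ k)))" for k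
  have "(\<lambda>k. Re (inverse ((1 + (- c * complex_of_real t) / of_nat k) ^ k)))
      \<longlonglongrightarrow> Re (exp (c * complex_of_real t))" for c
    using tendsto_inverse[OF tendsto_cexp_limit_sequentially[of "- c * complex_of_real t"]]
    by (intro tendsto_Re) (simp add: exp_minus)
  then have lim: "u \<longlonglongrightarrow> exp_sum_gap z p t"
    unfolding u_def exp_sum_gap_def Re_sum_list by (intro tendsto_diff tendsto_sum_list)
  have "eventually (\<lambda>k. u (Suc k) \<ge> 0) sequentially"
    using nonpos
  proof eventually_elim
    case (elim k)
    define x where "x = real (Suc k) / t"
    have x: "x > 0"
      using t by (simp add: x_def)
    have "1 + (- c * complex_of_real t) / of_nat (Suc k) = 1 - c / complex_of_real x" for c
      using t by (simp add: x_def field_simps)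
    then have "u (Suc k) = (\<Sum>c\<leftarrow>p. x ^ Suc k * re_inv_pow c (Suc k) x)
        - (\<Sum>c\<leftarrow>z. x ^ Suc k * re_inv_pow c (Suc k) x)"
      unfolding u_def by (simp only: re_inv_pow_scaled[OF x])
    also have "\<dots> = - (x ^ Suc k * recip_power_sum z p (Suc k) x)"
      unfolding sum_list_const_mult recip_power_sum_def by (simp add: algebra_simps)
    finally show ?case
      using elim x unfolding x_def[symmetric] by (simp add: mult_nonneg_nonpos)
  qed
  with LIMSEQ_Suc[OF lim] show ?thesis
    by (rule tendsto_lowerbound) simp
qed

lemma exp_sum_gap_limit_0: "(\<lambda>j. exp_sum_gap z p (1 / real (Suc j))) \<longlonglongrightarrow> exp_sum_gap z p 0"
proof -
  have "(\<lambda>j. 1 / real (Suc j)) \<longlonglongrightarrow> 0"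
    using LIMSEQ_Suc[OF lim_inverse_n'] by simp
  then have "(\<lambda>j. exp (c * complex_of_real (1 / real (Suc j)))) \<longlonglongrightarrow> exp (c * complex_of_real 0)" for c
    by (intro tendsto_exp tendsto_mult tendsto_const tendsto_of_real)
  then show ?thesis
    unfolding exp_sum_gap_def by (intro tendsto_diff tendsto_Re tendsto_sum_list)
qed

subsection \<open>The Laplace transform of the exponential sum\<close>

fun pow_exp_antideriv :: "nat \<Rightarrow> complex \<Rightarrow> complex \<Rightarrow> complex" where
  "pow_exp_antideriv 0 w t = - exp (- w * t) / w"
| "pow_exp_antideriv (Suc k) w t =
     - (t ^ Suc k * exp (- w * t)) / w + of_nat (Suc k) / w * pow_exp_antideriv k w t"

lemma pow_exp_antideriv_deriv:
  assumes "w \<noteq> 0"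
  shows "(pow_exp_antideriv k w has_field_derivative t ^ k * exp (- w * t)) (at t)"
proof (induction k)
  case 0
  show ?case
    unfolding pow_exp_antideriv.simps [abs_def]
    using assms by (auto intro!: derivative_eq_intros simp: field_simps)
next
  case (Suc k)
  have "((\<lambda>t. - (t ^ Suc k * exp (- w * t)) / w + of_nat (Suc k) / w * pow_exp_antideriv k w t)
      has_field_derivative t ^ Suc k * exp (- w * t)) (at t)"
    using assms by (auto intro!: derivative_eq_intros Suc.IH simp: field_simps) (cases k; simp)
  then show ?case
    unfolding pow_exp_antideriv.simps [abs_def] by simp
qed

lemma pow_exp_antideriv_0:
  assumes "w \<noteq> 0"
  shows "pow_exp_antideriv k w 0 = - fact k / w ^ Suc k"
proof (induction k)
  case (Suc k)
  have "pow_exp_antideriv (Suc k) w 0 = of_nat (Suc k) / w * (- fact k / w ^ Suc k)"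
    by (simp only: pow_exp_antideriv.simps Suc.IH) simp
  also have "\<dots> = - fact (Suc k) / w ^ Suc (Suc k)"
    using assms by (simp add: field_simps)
  finally show ?case .
qed simp

lemma tendsto_power_mult_exp_neg_at_top:
  fixes a :: real
  assumes "a > 0"
  shows "((\<lambda>T. T ^ j * exp (- a * T)) \<longlongrightarrow> 0) at_top"
proof -
  have "((\<lambda>T. (a * T) ^ j / exp (a * T) / a ^ j) \<longlongrightarrow> 0 / a ^ j) at_top"
    using assms
    by (intro tendsto_divide tendsto_const filterlim_compose[OF tendsto_power_div_exp_0]
        filterlim_tendsto_pos_mult_at_top[OF tendsto_const _ filterlim_ident]) auto
  moreover have "(a * T) ^ j / exp (a * T) / a ^ j = T ^ j * exp (- a * T)" for T
    using assms by (simp add: power_mult_distrib exp_minus field_simps)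
  ultimately show ?thesis
    by simp
qed

lemma tendsto_power_mult_cexp_neg_at_top:
  assumes "Re w > 0"
  shows "((\<lambda>T::real. complex_of_real T ^ j * exp (- w * complex_of_real T)) \<longlongrightarrow> 0) at_top"
proof -
  have "eventually (\<lambda>T. T ^ j * exp (- Re w * T)
      = norm (complex_of_real T ^ j * exp (- w * complex_of_real T))) at_top"
    using eventually_ge_at_top[of 0] by eventually_elim (simp add: norm_mult norm_power)
  with tendsto_power_mult_exp_neg_at_top[OF assms]
  have "((\<lambda>T. norm (complex_of_real T ^ j * exp (- w * complex_of_real T))) \<longlongrightarrow> 0) at_top"
    by (rule Lim_transform_eventually)
  then show ?thesis
    by (simp only: tendsto_norm_zero_iff)
qed

lemma tendsto_pow_exp_antideriv_at_top:
  assumes "Re w > 0"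
  shows "((\<lambda>T::real. pow_exp_antideriv k w (complex_of_real T)) \<longlongrightarrow> 0) at_top"
proof (induction k)
  case 0
  have "((\<lambda>T::real. - (complex_of_real T ^ 0 * exp (- w * complex_of_real T)) / w) \<longlongrightarrow> - 0 / w) at_top"
    by (intro tendsto_intros tendsto_power_mult_cexp_neg_at_top assms) (use assms in auto)
  then show ?case
    by simp
next
  case (Suc k)
  have "((\<lambda>T::real. - (complex_of_real T ^ Suc k * exp (- w * complex_of_real T)) / w
      + of_nat (Suc k) / w * pow_exp_antideriv k w (complex_of_real T)) \<longlongrightarrow> - 0 / w + of_nat (Suc k) / w * 0) at_top"
    by (intro tendsto_intros tendsto_power_mult_cexp_neg_at_top assms Suc.IH) (use assms in auto)
  then show ?case
    by simp
qed

text \<open>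
  \<open>laplace_primitive z p k x T\<close> is \<open>-\<integral>\<^sub>T\<^sup>\<infinity> s\<^sup>k exp (-x s) g(s) ds\<close> for the exponential
  sum \<open>g = exp_sum_gap z p\<close>.
\<close>

definition laplace_primitive :: "complex list \<Rightarrow> complex list \<Rightarrow> nat \<Rightarrow> real \<Rightarrow> real \<Rightarrow> real" where
  "laplace_primitive z p k x T =
     Re ((\<Sum>c\<leftarrow>p. pow_exp_antideriv k (complex_of_real x - c) (complex_of_real T))
       - (\<Sum>c\<leftarrow>z. pow_exp_antideriv k (complex_of_real x - c) (complex_of_real T)))"

lemma laplace_primitive_deriv:
  assumes "\<And>c. c \<in> set z \<union> set p \<Longrightarrow> complex_of_real x \<noteq> c"
  shows "(laplace_primitive z p k x has_real_derivative T ^ k * exp (- x * T) * exp_sum_gap z p T) (at T)"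
proof -
  have shift: "complex_of_real T ^ k * exp (- (complex_of_real x - c) * complex_of_real T)
      = complex_of_real (T ^ k * exp (- x * T)) * exp (c * complex_of_real T)" for c
    by (simp add: exp_add [symmetric] algebra_simps flip: exp_of_real)
  have "((\<lambda>T. (\<Sum>c\<leftarrow>p. pow_exp_antideriv k (complex_of_real x - c) T)
      - (\<Sum>c\<leftarrow>z. pow_exp_antideriv k (complex_of_real x - c) T)) has_field_derivative
      (\<Sum>c\<leftarrow>p. complex_of_real T ^ k * exp (- (complex_of_real x - c) * complex_of_real T))
      - (\<Sum>c\<leftarrow>z. complex_of_real T ^ k * exp (- (complex_of_real x - c) * complex_of_real T)))
      (at (complex_of_real T))"
    using assms by (intro DERIV_diff has_field_derivative_sum_list pow_exp_antideriv_deriv) auto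
  from has_real_derivative_Re_of_real[OF this] show ?thesis
    unfolding laplace_primitive_def [abs_def] exp_sum_gap_def shift sum_list_const_mult
    by (simp add: right_diff_distrib)
qed

lemma laplace_primitive_0:
  assumes "\<And>c. c \<in> set z \<union> set p \<Longrightarrow> complex_of_real x \<noteq> c"
  shows "laplace_primitive z p k x 0 = fact k * recip_power_sum z p (Suc k) x"
proof -
  have "Re (pow_exp_antideriv k (complex_of_real x - c) 0) = - fact k * re_inv_pow c (Suc k) x"
    if "c \<in> set z \<union> set p" for c
  proof -
    have "pow_exp_antideriv k (complex_of_real x - c) 0
        = complex_of_real (- fact k) * inverse ((complex_of_real x - c) ^ Suc k)"
      using assms[OF that] by (simp add: pow_exp_antideriv_0 divide_inverse)
    then show ?thesis
      unfolding re_inv_pow_def by (simp only: Re_mult_of_real)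
  qed
  then have "laplace_primitive z p k x 0 = (\<Sum>c\<leftarrow>p. - fact k * re_inv_pow c (Suc k) x)
      - (\<Sum>c\<leftarrow>z. - fact k * re_inv_pow c (Suc k) x)"
    unfolding laplace_primitive_def Re_sum_list minus_complex.sel
    by (intro arg_cong2[where f="(-)"] arg_cong[where f=sum_list] map_cong) auto
  then show ?thesis
    unfolding sum_list_const_mult recip_power_sum_def by (simp add: algebra_simps)
qed

lemma tendsto_laplace_primitive_at_top:
  assumes "\<And>c. c \<in> set z \<union> set p \<Longrightarrow> Re c < x"
  shows "(laplace_primitive z p k x \<longlongrightarrow> 0) at_top"
proof -
  have "((\<lambda>T. \<Sum>c\<leftarrow>cs. pow_exp_antideriv k (complex_of_real x - c) (complex_of_real T))
      \<longlongrightarrow> (\<Sum>c\<leftarrow>cs. 0)) at_top" if "set cs \<subseteq> set z \<union> set p" for cs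
    using that assms by (intro tendsto_sum_list tendsto_pow_exp_antideriv_at_top) auto
  from tendsto_Re[OF tendsto_diff[OF this this]] show ?thesis
    unfolding laplace_primitive_def [abs_def] by simp
qed

lemma recip_power_sum_nonpos:
  assumes left: "\<And>c. c \<in> set z \<union> set p \<Longrightarrow> Re c < x"
    and gap: "\<And>t. t \<ge> 0 \<Longrightarrow> exp_sum_gap z p t \<ge> 0"
  shows "recip_power_sum z p (Suc k) x \<le> 0"
proof -
  have roots: "complex_of_real x \<noteq> c" if "c \<in> set z \<union> set p" for c
    using left[OF that] by auto
  have mono: "laplace_primitive z p k x 0 \<le> laplace_primitive z p k x T" if "T \<ge> 0" for T
    by (rule deriv_nonneg_imp_mono[OF laplace_primitive_deriv[where z=z and p=p, OF roots]])
      (use that gap in auto)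
  have "eventually (\<lambda>T. laplace_primitive z p k x 0 \<le> laplace_primitive z p k x T) at_top"
    using eventually_ge_at_top[of 0] by (rule eventually_mono) (rule mono)
  then have "laplace_primitive z p k x 0 \<le> 0"
    using tendsto_laplace_primitive_at_top[where z=z and p=p, OF left]
    by (intro tendsto_lowerbound) auto
  then show ?thesis
    using laplace_primitive_0[where z=z and p=p, OF roots] by (simp add: fact_mult_le_0_iff)
qed

subsection \<open>Zeros to the right of the poles\<close>

lemma cos_two_pi_ge_half_near_int:
  assumes "\<bar>y - of_int j\<bar> < 1/6"
  shows "cos (2 * pi * y) \<ge> 1/2"
proof -
  have shift: "2 * pi * y = 2 * pi * (y - of_int j) + 2 * pi * of_int j"
    by (simp add: algebra_simps)
  have "cos (2 * pi * y) = cos \<bar>2 * pi * (y - of_int j)\<bar>"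
    unfolding shift cos_add by simp
  moreover have "\<bar>2 * pi * (y - of_int j)\<bar> \<le> pi / 3"
    using assms by (simp add: abs_mult)
  then have "cos (pi / 3) \<le> cos \<bar>2 * pi * (y - of_int j)\<bar>"
    by (intro cos_monotone_0_pi_le) auto
  ultimately show ?thesis
    by (simp add: cos_60)
qed

lemma obtain_large_simultaneous_cos_ge_half:
  fixes ws :: "real list" and T :: real
  assumes "T \<ge> 0"
  obtains t where "t \<ge> T" and "\<And>\<omega>. \<omega> \<in> set ws \<Longrightarrow> cos (\<omega> * t) \<ge> 1/2"
proof -
  define \<theta> where "\<theta> i = ws ! i * T / (2 * pi)" for i
  obtain q j where q: "0 < q"
    and approx: "\<And>i. i < length ws \<Longrightarrow> \<bar>of_int q * \<theta> i - of_int (j i)\<bar> < 1 / real 6"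
    using Dirichlet_approx_simult[where \<theta>=\<theta> and N=6 and n="length ws"] by (metis zero_less_numeral)
  show ?thesis
  proof
    have "1 * T \<le> of_int q * T"
      using q assms by (intro mult_right_mono) auto
    then show "T \<le> of_int q * T"
      by simp
  next
    fix \<omega> assume "\<omega> \<in> set ws"
    then obtain i where i: "i < length ws" "\<omega> = ws ! i"
      by (auto simp: in_set_conv_nth)
    then have "\<omega> * (of_int q * T) = 2 * pi * (of_int q * \<theta> i)"
      by (simp add: \<theta>_def field_simps)
    moreover have "\<bar>of_int q * \<theta> i - of_int (j i)\<bar> < 1/6"
      using approx[OF i(1)] by simp
    then have "cos (2 * pi * (of_int q * \<theta> i)) \<ge> 1/2"
      by (rule cos_two_pi_ge_half_near_int)
    ultimately show "cos (\<omega> * (of_int q * T)) \<ge> 1/2"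
      by metis
  qed
qed

lemma abs_sum_list_Re_exp_le:
  assumes "t \<ge> 0" and "\<And>d. d \<in> set ds \<Longrightarrow> Re d \<le> b"
  shows "\<bar>\<Sum>d\<leftarrow>ds. Re (exp (d * complex_of_real t))\<bar> \<le> real (length ds) * exp (b * t)"
proof -
  have "\<bar>Re (exp (d * complex_of_real t))\<bar> \<le> exp (b * t)" if "d \<in> set ds" for d
  proof -
    have "\<bar>Re (exp (d * complex_of_real t))\<bar> \<le> exp (Re d * t)"
      using abs_Re_le_cmod[of "exp (d * complex_of_real t)"] by simp
    also have "\<dots> \<le> exp (b * t)"
      using assms that by (simp add: mult_right_mono)
    finally show ?thesis .
  qed
  then have "(\<Sum>d\<leftarrow>ds. \<bar>Re (exp (d * complex_of_real t))\<bar>) \<le> (\<Sum>d\<leftarrow>ds. exp (b * t))"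
    by (rule sum_list_mono)
  with sum_list_abs[of "map (\<lambda>d. Re (exp (d * complex_of_real t))) ds"] show ?thesis
    by (simp add: sum_list_triv o_def)
qed

lemma sum_list_Re_exp_ge_half:
  assumes "ds \<noteq> []" and "\<And>d. d \<in> set ds \<Longrightarrow> Re d = a \<and> cos (Im d * t) \<ge> 1/2"
  shows "exp (a * t) / 2 \<le> (\<Sum>d\<leftarrow>ds. Re (exp (d * complex_of_real t)))"
proof -
  have "1 \<le> real (length ds)"
    using assms(1) by (cases ds) auto
  then have "exp (a * t) / 2 \<le> real (length ds) * (exp (a * t) / 2)"
    using mult_right_mono[of 1 "real (length ds)" "exp (a * t) / 2"] by simp
  also have "\<dots> = (\<Sum>d\<leftarrow>ds. exp (a * t) * (1/2))"
    by (simp add: sum_list_triv)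
  also have "\<dots> \<le> (\<Sum>d\<leftarrow>ds. Re (exp (d * complex_of_real t)))"
    using assms(2) by (intro sum_list_mono) (simp add: Re_exp)
  finally show ?thesis .
qed

lemma exp_sum_gap_le_dominant_zeros:
  assumes t: "t \<ge> 0" and d0: "d0 \<in> set z" "Re d0 = a"
    and poles: "\<And>d. d \<in> set p \<Longrightarrow> Re d \<le> b"
    and other_zeros: "\<And>d. d \<in> set z \<Longrightarrow> Re d \<noteq> a \<Longrightarrow> Re d \<le> b"
    and cos_top: "\<And>d. d \<in> set z \<Longrightarrow> Re d = a \<Longrightarrow> cos (Im d * t) \<ge> 1/2"
  shows "exp_sum_gap z p t \<le> real (length p + length z) * exp (b * t) - exp (a * t) / 2"
proof -
  define e where "e d = Re (exp (d * complex_of_real t))" for d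
  define top where "top = filter (\<lambda>d. Re d = a) z"
  define rest where "rest = filter (\<lambda>d. \<not> Re d = a) z"
  have P: "\<bar>\<Sum>d\<leftarrow>p. e d\<bar> \<le> real (length p) * exp (b * t)"
    unfolding e_def using t poles by (rule abs_sum_list_Re_exp_le)
  have "\<bar>\<Sum>d\<leftarrow>rest. e d\<bar> \<le> real (length rest) * exp (b * t)"
    unfolding e_def using t other_zeros by (intro abs_sum_list_Re_exp_le) (auto simp: rest_def)
  moreover have "real (length rest) * exp (b * t) \<le> real (length z) * exp (b * t)"
    unfolding rest_def by (intro mult_right_mono) (auto simp: length_filter_le)
  ultimately have R: "\<bar>\<Sum>d\<leftarrow>rest. e d\<bar> \<le> real (length z) * exp (b * t)"
    by linarith
  have "top \<noteq> []"
    using d0 by (auto simp: top_def filter_empty_conv)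
  then have T: "exp (a * t) / 2 \<le> (\<Sum>d\<leftarrow>top. e d)"
    unfolding e_def using cos_top by (intro sum_list_Re_exp_ge_half) (auto simp: top_def)
  have "(\<Sum>d\<leftarrow>z. e d) = (\<Sum>d\<leftarrow>top. e d) + (\<Sum>d\<leftarrow>rest. e d)"
    unfolding top_def rest_def by (rule sum_list_filter_partition)
  moreover have "exp_sum_gap z p t = (\<Sum>d\<leftarrow>p. e d) - (\<Sum>d\<leftarrow>z. e d)"
    by (simp add: exp_sum_gap_def Re_sum_list e_def)
  ultimately show ?thesis
    using P R T unfolding of_nat_add distrib_right by linarith
qed

lemma eventually_mult_exp_less_half_exp:
  fixes n a b :: real
  assumes "b < a"
  shows "eventually (\<lambda>t. n * exp (b * t) < exp (a * t) / 2) at_top"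
proof -
  have "((\<lambda>t. n * (t ^ 0 * exp (- (a - b) * t))) \<longlongrightarrow> n * 0) at_top"
    using assms by (intro tendsto_mult tendsto_const tendsto_power_mult_exp_neg_at_top) simp
  then have "eventually (\<lambda>t. n * (t ^ 0 * exp (- (a - b) * t)) < 1/2) at_top"
    by (intro order_tendstoD(2)) auto
  then show ?thesis
  proof eventually_elim
    case (elim t)
    have "n * exp (b * t) = n * exp (- (a - b) * t) * exp (a * t)"
      by (simp add: exp_add [symmetric] algebra_simps)
    also have "\<dots> < 1/2 * exp (a * t)"
      using elim by (intro mult_strict_right_mono) auto
    finally show ?case
      by simp
  qed
qed

lemma Re_zero_le_Max_Re_poles:
  assumes "p \<noteq> []" and gap: "\<And>t. t \<ge> 0 \<Longrightarrow> exp_sum_gap z p t \<ge> 0" and "c \<in> set z"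
  shows "Re c \<le> Max (Re ` set p)"
proof (rule ccontr)
  define \<sigma> where "\<sigma> = Max (Re ` set p)"
  define a where "a = Max (Re ` set z)"
  define b where "b = Max (insert \<sigma> (Re ` set (filter (\<lambda>d. Re d \<noteq> a) z)))"
  assume "\<not> Re c \<le> Max (Re ` set p)"
  then have "\<sigma> < Re c"
    by (simp add: \<sigma>_def)
  have "a \<in> Re ` set z"
    unfolding a_def using \<open>c \<in> set z\<close> by (intro Max_in) auto
  then obtain d0 where d0: "d0 \<in> set z" "Re d0 = a"
    by auto
  have below_a: "Re d \<le> a" if "d \<in> set z" for d
    using that by (auto simp: a_def)
  have "b < a"
    unfolding b_def using \<open>\<sigma> < Re c\<close> below_a[OF \<open>c \<in> set z\<close>] below_a
    by (subst Max_less_iff) (auto simp: le_less)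
  have poles: "Re d \<le> b" if "d \<in> set p" for d
  proof -
    have "Re d \<le> \<sigma>"
      using that by (auto simp: \<sigma>_def)
    also have "\<sigma> \<le> b"
      by (auto simp: b_def)
    finally show ?thesis .
  qed
  have other_zeros: "Re d \<le> b" if "d \<in> set z" "Re d \<noteq> a" for d
    using that by (auto simp: b_def)
  obtain T where T: "\<And>t. t \<ge> T \<Longrightarrow> real (length p + length z) * exp (b * t) < exp (a * t) / 2"
    using eventually_mult_exp_less_half_exp[OF \<open>b < a\<close>] by (auto simp: eventually_at_top_linorder)
  obtain t where t: "t \<ge> max T 0"
    and cos_top: "\<And>\<omega>. \<omega> \<in> set (map Im (filter (\<lambda>d. Re d = a) z)) \<Longrightarrow> cos (\<omega> * t) \<ge> 1/2"
    using obtain_large_simultaneous_cos_ge_half[where T="max T 0" and ws="map Im (filter (\<lambda>d. Re d = a) z)"]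
    by auto
  have "exp_sum_gap z p t \<le> real (length p + length z) * exp (b * t) - exp (a * t) / 2"
    using t d0 poles other_zeros cos_top by (intro exp_sum_gap_le_dominant_zeros) auto
  also have "\<dots> < 0"
    using T[of t] t by simp
  finally show False
    using gap[of t] t by simp
qed

lemma open_abscissa_interval: "open (abscissa_interval p)"
  by (simp add: abscissa_interval_def)

lemma Re_lt_of_mem_abscissa_interval:
  assumes "x \<in> abscissa_interval p" and "c \<in> set p"
  shows "Re c < x"
proof -
  have "Re c \<le> Max (Re ` set p)"
    using assms(2) by simp
  also have "\<dots> < x"
    using assms by (cases "p = []") (auto simp: abscissa_interval_def)
  finally show ?thesis .
qed

lemma abscissa_interval_upclosed: "x \<in> abscissa_interval p \<Longrightarrow> x \<le> y \<Longrightarrow> y \<in> abscissa_interval p"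
  by (auto simp: abscissa_interval_def split: if_splits)

lemma eventually_mem_abscissa_interval: "eventually (\<lambda>x. x \<in> abscissa_interval p) at_top"
proof (cases "p = []")
  case False
  show ?thesis
    using eventually_gt_at_top[of "Max (Re ` set p)"]
    by eventually_elim (use False in \<open>simp add: abscissa_interval_def\<close>)
qed (simp add: abscissa_interval_def)

lemma roots_left_of_abscissa_interval:
  assumes gap: "\<And>t. t \<ge> 0 \<Longrightarrow> exp_sum_gap z p t \<ge> 0"
    and x: "x \<in> abscissa_interval p" and c: "c \<in> set z \<union> set p"
  shows "Re c < x"
proof (cases "p = []")
  case True
  then have "z = []"
    using gap[of 0] by (simp add: exp_sum_gap_0)
  with True c show ?thesis
    by simp
next
  case False
  show ?thesis
  proof (cases "c \<in> set p")
    case True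
    with x show ?thesis
      by (rule Re_lt_of_mem_abscissa_interval)
  next
    case False
    with c have "Re c \<le> Max (Re ` set p)"
      using \<open>p \<noteq> []\<close> gap by (intro Re_zero_le_Max_Re_poles) auto
    moreover have "Max (Re ` set p) < x"
      using x \<open>p \<noteq> []\<close> by (simp add: abscissa_interval_def)
    ultimately show ?thesis
      by simp
  qed
qed

subsection \<open>The rational function on the real axis\<close>

lemma poly_roots_poly: "poly (roots_poly r) w = (\<Prod>c\<leftarrow>r. w - c)"
  by (induction r) (auto simp: roots_poly_def algebra_simps)

lemma prod_list_of_real_minus_in_Reals:
  assumes "\<forall>k. coeff (roots_poly r) k \<in> \<real>"
  shows "(\<Prod>c\<leftarrow>r. complex_of_real x - c) \<in> \<real>"
proof -
  have "(\<Prod>c\<leftarrow>r. complex_of_real x - c)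
      = (\<Sum>i\<le>degree (roots_poly r). coeff (roots_poly r) i * complex_of_real x ^ i)"
    by (simp add: poly_altdef flip: poly_roots_poly)
  also have "\<dots> \<in> \<real>"
    using assms by (intro sum_in_Reals Reals_mult Reals_power) auto
  finally show ?thesis .
qed

lemma tendsto_prod_list_one_minus_div_at_top:
  "((\<lambda>x::real. \<Prod>c\<leftarrow>r. 1 - c / complex_of_real x) \<longlongrightarrow> 1) at_top"
proof (induction r)
  case (Cons a r)
  have "((\<lambda>x::real. a / complex_of_real x) \<longlongrightarrow> 0) at_top"
    by (rule tendsto_divide_0[OF tendsto_const filterlim_of_real_at_infinity])
  from tendsto_mult[OF tendsto_diff[OF tendsto_const this] Cons.IH] show ?case
    by simp
qed simp

lemma prod_list_minus_factor:
  "(w::complex) \<noteq> 0 \<Longrightarrow> (\<Prod>c\<leftarrow>r. w - c) = w ^ length r * (\<Prod>c\<leftarrow>r. 1 - c / w)"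
  by (induction r) (auto simp: field_simps)

locale real_rat_fun =
  fixes K :: real and z p :: "complex list"
  assumes K_nonzero: "K \<noteq> 0"
    and real_coeffs_zeros: "\<forall>k. coeff (roots_poly z) k \<in> \<real>"
    and real_coeffs_poles: "\<forall>k. coeff (roots_poly p) k \<in> \<real>"
begin

definition h :: "real \<Rightarrow> real" where
  "h x = Re (rat_fun K z p (complex_of_real x))"

abbreviation I :: "real set" where
  "I \<equiv> abscissa_interval p"

lemma of_real_h: "complex_of_real (h x) = rat_fun K z p (complex_of_real x)"
proof -
  have "rat_fun K z p (complex_of_real x) \<in> \<real>"
    unfolding rat_fun_def
    using prod_list_of_real_minus_in_Reals[OF real_coeffs_zeros]
      prod_list_of_real_minus_in_Reals[OF real_coeffs_poles]
    by (intro Reals_divide Reals_mult) auto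
  then show ?thesis
    by (simp add: h_def Reals_def)
qed

lemma h_nonzero_iff: "h x \<noteq> 0 \<longleftrightarrow> (\<forall>c \<in> set z \<union> set p. complex_of_real x \<noteq> c)"
proof -
  have "h x \<noteq> 0 \<longleftrightarrow> rat_fun K z p (complex_of_real x) \<noteq> 0"
    by (metis of_real_eq_0_iff of_real_h)
  then show ?thesis
    using K_nonzero by (auto simp: rat_fun_def prod_list_zero_iff)
qed

lemma ln_h:
  assumes "\<And>c. c \<in> set z \<union> set p \<Longrightarrow> complex_of_real x \<noteq> c"
  shows "ln (h x) = ln_abs_rat_fun K z p x"
proof -
  have "ln (h x) = ln (cmod (complex_of_real (h x)))"
    by (simp add: ln_real_def)
  with ln_norm_rat_fun[OF K_nonzero assms] show ?thesis
    by (simp add: of_real_h)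
qed

lemma LCM_on_h_iff:
  assumes pos: "\<forall>x\<in>I. h x > 0"
  shows "LCM_on h I \<longleftrightarrow> (\<forall>k. \<forall>x\<in>I. recip_power_sum z p (Suc k) x \<le> 0)"
proof -
  have roots: "complex_of_real x \<noteq> c" if "x \<in> I" and "c \<in> set z \<union> set p" for x c
  proof -
    have "h x \<noteq> 0"
      using pos that(1) by auto
    with that(2) show ?thesis
      by (simp add: h_nonzero_iff)
  qed
  have "0 \<le> (-1) ^ Suc k * (deriv ^^ Suc k) (\<lambda>x. ln (h x)) x \<longleftrightarrow> recip_power_sum z p (Suc k) x \<le> 0"
    if "x \<in> I" for k x
  proof -
    have ln_h_on_I: "ln (h y) = ln_abs_rat_fun K z p y" if "y \<in> I" for y
      using roots[OF that] by (rule ln_h)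
    have "(deriv ^^ Suc k) (\<lambda>x. ln (h x)) x = (-1) ^ k * fact k * recip_power_sum z p (Suc k) x"
      using open_abscissa_interval roots ln_h_on_I that
      by (rule higher_deriv_ln_abs_rat_fun[where F="\<lambda>x. ln (h x)"])
    then show ?thesis
      by (simp only: minus_one_power_Suc_fact_mult_nonneg_iff)
  qed
  note sign = this
  have "LCM_on h I \<longleftrightarrow> (\<forall>k. \<forall>x\<in>I. 0 \<le> (-1) ^ Suc k * (deriv ^^ Suc k) (\<lambda>x. ln (h x)) x)"
    using pos unfolding LCM_on_def all_ge_1_iff_all_Suc by simp
  also have "\<dots> \<longleftrightarrow> (\<forall>k. \<forall>x\<in>I. recip_power_sum z p (Suc k) x \<le> 0)"
    using sign by simp
  finally show ?thesis .
qed

lemma eventually_h_eq_K_mult_pos: "eventually (\<lambda>x. \<exists>q>0. h x = K * q) at_top"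
proof -
  define Q where "Q x = (\<Prod>c\<leftarrow>z. 1 - c / complex_of_real x) / (\<Prod>c\<leftarrow>p. 1 - c / complex_of_real x)"
    for x :: real
  have "(Q \<longlongrightarrow> 1 / 1) at_top"
    unfolding Q_def by (intro tendsto_divide tendsto_prod_list_one_minus_div_at_top) auto
  then have "((\<lambda>x. Re (Q x)) \<longlongrightarrow> Re (1 / 1)) at_top"
    by (rule tendsto_Re)
  then have "eventually (\<lambda>x. Re (Q x) > 0) at_top"
    by (rule order_tendstoD) simp
  then show ?thesis
    using eventually_gt_at_top[of 0]
  proof eventually_elim
    case (elim x)
    have x: "complex_of_real x \<noteq> 0"
      using elim by simp
    have "rat_fun K z p (complex_of_real x)
        = complex_of_real K * (complex_of_real x ^ length z * (\<Prod>c\<leftarrow>z. 1 - c / complex_of_real x))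
          / (complex_of_real x ^ length p * (\<Prod>c\<leftarrow>p. 1 - c / complex_of_real x))"
      unfolding rat_fun_def using prod_list_minus_factor[OF x, of z] prod_list_minus_factor[OF x, of p]
      by simp
    also have "\<dots> = complex_of_real K * complex_of_real x ^ length z / complex_of_real x ^ length p * Q x"
      unfolding Q_def by (simp only: times_divide_times_eq mult.assoc)
    finally have "rat_fun K z p (complex_of_real x) = complex_of_real (K * (x ^ length z / x ^ length p)) * Q x"
      by simp
    then have "h x = K * (x ^ length z / x ^ length p * Re (Q x))"
      unfolding h_def by (simp only: Re_mult_of_real mult.assoc)
    moreover have "x ^ length z / x ^ length p * Re (Q x) > 0"
      using elim by simp
    ultimately show ?case
      by blast
  qed
qed

lemma K_pos_iff_eventually_h_pos: "K > 0 \<longleftrightarrow> eventually (\<lambda>x. h x > 0) at_top"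
proof
  assume "K > 0"
  show "eventually (\<lambda>x. h x > 0) at_top"
    using eventually_h_eq_K_mult_pos by eventually_elim (use \<open>K > 0\<close> in auto)
next
  assume "eventually (\<lambda>x. h x > 0) at_top"
  then have "eventually (\<lambda>x. h x > 0 \<and> (\<exists>q>0. h x = K * q)) at_top"
    using eventually_h_eq_K_mult_pos by (rule eventually_conj)
  then obtain N where "\<forall>x\<ge>N. h x > 0 \<and> (\<exists>q>0. h x = K * q)"
    by (auto simp: eventually_at_top_linorder)
  then have "h N > 0" "\<exists>q>0. h N = K * q"
    by auto
  then show "K > 0"
    by (auto simp: zero_less_mult_iff)
qed

lemma isCont_h:
  assumes "\<And>c. c \<in> set p \<Longrightarrow> complex_of_real y \<noteq> c"
  shows "isCont h y"
proof -
  have "(\<Prod>c\<leftarrow>p. complex_of_real y - c) \<noteq> 0"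
    using assms by (auto simp: prod_list_zero_iff)
  then have "isCont (\<lambda>x. rat_fun K z p (complex_of_real x)) y"
    unfolding rat_fun_def by (intro continuous_intros isCont_prod_list_of_real_minus) auto
  then show ?thesis
    unfolding h_def [abs_def] by (rule continuous_Re)
qed

lemma h_pos_on_abscissa_interval:
  assumes "K > 0" and left: "\<And>x c. x \<in> I \<Longrightarrow> c \<in> set z \<union> set p \<Longrightarrow> Re c < x"
  shows "\<forall>x\<in>I. h x > 0"
proof (rule ccontr)
  assume "\<not> (\<forall>x\<in>I. h x > 0)"
  then obtain x0 where x0: "x0 \<in> I" "h x0 \<le> 0"
    by auto
  obtain X where X: "\<And>x. x \<ge> X \<Longrightarrow> h x > 0"
    using \<open>K > 0\<close> K_pos_iff_eventually_h_pos by (auto simp: eventually_at_top_linorder)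
  have nonzero: "h y \<noteq> 0" if "y \<ge> x0" for y
    using left abscissa_interval_upclosed[OF x0(1) that] h_nonzero_iff by fastforce
  define x1 where "x1 = max X x0"
  have "continuous_on {x0..x1} h"
    using left abscissa_interval_upclosed[OF x0(1)]
    by (intro continuous_at_imp_continuous_on ballI isCont_h) fastforce
  moreover have "h x0 \<le> 0" "0 \<le> h x1" "x0 \<le> x1"
    using x0 X[of x1] by (auto simp: x1_def)
  ultimately obtain y where "y \<ge> x0" "h y = 0"
    using IVT'[of h x0 0 x1] by auto
  with nonzero show False
    by simp
qed

lemma LCM_on_h_imp_K_pos:
  assumes "LCM_on h I"
  shows "K > 0"
proof -
  have "\<forall>x\<in>I. h x > 0"
    using assms by (simp add: LCM_on_def)
  with eventually_mem_abscissa_interval[of p] have "eventually (\<lambda>x. h x > 0) at_top"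
    by (auto elim: eventually_mono)
  then show ?thesis
    by (simp add: K_pos_iff_eventually_h_pos)
qed

lemma LCM_on_h_imp_exp_sum_gap_nonneg:
  assumes "LCM_on h I" and "t \<ge> 0"
  shows "exp_sum_gap z p t \<ge> 0"
proof -
  have pos: "\<forall>x\<in>I. h x > 0"
    using assms(1) by (simp add: LCM_on_def)
  have nonpos: "recip_power_sum z p (Suc k) x \<le> 0" if "x \<in> I" for k x
    using assms(1) that by (simp add: LCM_on_h_iff[OF pos])
  obtain X where X: "\<And>x. x \<ge> X \<Longrightarrow> x \<in> I"
    using eventually_mem_abscissa_interval[of p] by (auto simp: eventually_at_top_linorder)
  have gap_at_pos: "exp_sum_gap z p t \<ge> 0" if "t > 0" for t
  proof (rule exp_sum_gap_nonneg_post_widder[OF that])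
    show "eventually (\<lambda>k. recip_power_sum z p (Suc k) (real (Suc k) / t) \<le> 0) sequentially"
      using eventually_ge_at_top[of "nat \<lceil>X * t\<rceil>"]
    proof eventually_elim
      case (elim k)
      then have "X \<le> real (Suc k) / t"
        using \<open>t > 0\<close> by (simp add: pos_le_divide_eq)
      then show ?case
        using nonpos X by blast
    qed
  qed
  show ?thesis
  proof (cases "t = 0")
    case True
    have "exp_sum_gap z p 0 \<ge> 0"
      using gap_at_pos by (intro LIMSEQ_le_const[OF exp_sum_gap_limit_0]) auto
    with True show ?thesis
      by simp
  qed (use gap_at_pos assms(2) in auto)
qed

lemma LCM_on_h_if_exp_sum_gap_nonneg:
  assumes "K > 0" and gap: "\<And>t. t \<ge> 0 \<Longrightarrow> exp_sum_gap z p t \<ge> 0"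
  shows "LCM_on h I"
proof -
  have left: "Re c < x" if "x \<in> I" "c \<in> set z \<union> set p" for x c
    using roots_left_of_abscissa_interval[OF gap that] .
  then have "\<forall>k. \<forall>x\<in>I. recip_power_sum z p (Suc k) x \<le> 0"
    using recip_power_sum_nonpos gap by blast
  with h_pos_on_abscissa_interval[OF \<open>K > 0\<close> left] show ?thesis
    by (simp add: LCM_on_h_iff)
qed

end

theorem lemma1:
  fixes K :: real and z p :: "complex list"
  assumes "K \<noteq> 0"
    and "\<forall>k. coeff (roots_poly z) k \<in> \<real>"
    and "\<forall>k. coeff (roots_poly p) k \<in> \<real>"
    and "set z \<inter> set p = {}"
  shows "LCM_on (\<lambda>s. Re (rat_fun K z p (complex_of_real s))) (abscissa_interval p) \<longleftrightarrow>
    (K > 0 \<and> (\<forall>t::real. t \<ge> 0 \<longrightarrow>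
       Re (\<Sum>pi\<leftarrow>p. exp (pi * complex_of_real t)) \<ge> Re (\<Sum>zi\<leftarrow>z. exp (zi * complex_of_real t))))"
proof -
  interpret real_rat_fun K z p
    using assms(1-3) by unfold_locales
  have h_eq: "(\<lambda>s. Re (rat_fun K z p (complex_of_real s))) = h"
    by (simp add: h_def [abs_def])
  have gap_iff: "Re (\<Sum>pi\<leftarrow>p. exp (pi * complex_of_real t)) \<ge> Re (\<Sum>zi\<leftarrow>z. exp (zi * complex_of_real t))
      \<longleftrightarrow> exp_sum_gap z p t \<ge> 0" for t
    by (simp add: exp_sum_gap_def)
  have "LCM_on h I \<longleftrightarrow> K > 0 \<and> (\<forall>t::real. t \<ge> 0 \<longrightarrow> exp_sum_gap z p t \<ge> 0)"
    using LCM_on_h_imp_K_pos LCM_on_h_imp_exp_sum_gap_nonneg LCM_on_h_if_exp_sum_gap_nonneg by blast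
  then show ?thesis
    unfolding h_eq gap_iff .
qed

end
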